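(* For every positive integer $n$, let $B_n$ be the $n\times n$ matrix over $\mathbb{Z}$ whose $(i,j)$-entry ($1\le i,j\le n$) is $1$ if $i+j$ is a power of two and $0$ otherwise. Then $\det B_n\in\{1,-1\}$.
   Context: Powers of two are $1,2,4,8,\ldots$. *)

theory Defs
  imports "Jordan_Normal_Form.Determinant"
begin

definition is_pow2 :: "nat \<Rightarrow> bool" where
  "is_pow2 m \<longleftrightarrow> (\<exists>k. m = 2 ^ k)"

text \<open>B n: the n x n integer matrix with (i,j)-entry (1-based indices i,j)
  equal to 1 if i + j is a power of two, else 0. JNF matrices are 0-indexed,
  so row i, column j (0-based) correspond to the 1-based indices i+1, j+1.\<close>
definition B :: "nat \<Rightarrow> int mat" where
  "B n = mat n n (\<lambda>(i, j). if is_pow2 ((i + 1) + (j + 1)) then 1 else 0)"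

end

theory Submission
  imports Defs
begin

text \<open>Let \<open>h = 2^k \<le> n < 2h\<close> and \<open>m = 2h - n - 1\<close> (0-based indices). Every index \<open>i\<close> of
  \<open>B n\<close> with \<open>i \<ge> m\<close> is paired by \<open>i \<mapsto> 2h - 2 - i\<close> with another such index, and the
  corresponding entry is \<open>1\<close> because the 1-based indices sum to \<open>2h\<close>. Since \<open>2h\<close> is the only
  power of two strictly between \<open>h\<close> and \<open>4h\<close>, every nonvanishing term of the Leibniz expansion of
  \<open>det (B n)\<close> must follow this pairing on \<open>{m..<n}\<close>. Hence \<open>det (B n) = \<plusminus> det (B m)\<close> with
  \<open>m < n\<close>, and induction ends at \<open>det (B 0) = 1\<close>.\<close>

lemma bij_betw_compose_block_permutation:
  fixes m n :: nat
  assumes mn: "m \<le> n" and g: "g permutes {m..<n}"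
  shows "bij_betw (\<lambda>\<tau>. \<tau> \<circ> g) {\<tau>. \<tau> permutes {0..<m}}
           {\<sigma>. \<sigma> permutes {0..<n} \<and> (\<forall>i\<in>{m..<n}. \<sigma> i = g i)}"
proof (rule bij_betw_byWitness[where f' = "\<lambda>\<sigma>. \<sigma> \<circ> Hilbert_Choice.inv g"])
  have gn: "g permutes {0..<n}" using g by (rule permutes_subset) auto
  show "\<forall>\<tau>\<in>{\<tau>. \<tau> permutes {0..<m}}. \<tau> \<circ> g \<circ> Hilbert_Choice.inv g = \<tau>"
    using permutes_inv_o(1)[OF g] by (simp add: o_assoc[symmetric])
  show "\<forall>\<sigma>\<in>{\<sigma>. \<sigma> permutes {0..<n} \<and> (\<forall>i\<in>{m..<n}. \<sigma> i = g i)}.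
          \<sigma> \<circ> Hilbert_Choice.inv g \<circ> g = \<sigma>"
    using permutes_inv_o(2)[OF g] by (simp add: o_assoc[symmetric])
  show "(\<lambda>\<tau>. \<tau> \<circ> g) ` {\<tau>. \<tau> permutes {0..<m}}
          \<subseteq> {\<sigma>. \<sigma> permutes {0..<n} \<and> (\<forall>i\<in>{m..<n}. \<sigma> i = g i)}"
  proof clarify
    fix \<tau> assume \<tau>: "\<tau> permutes {0..<m}"
    have "\<tau> permutes {0..<n}" using \<tau> mn by (intro permutes_subset[OF \<tau>]) auto
    moreover have "\<tau> (g i) = g i" if "i \<in> {m..<n}" for i
      using permutes_in_image[OF g, of i] permutes_not_in[OF \<tau>, of "g i"] that by auto
    ultimately show "\<tau> \<circ> g permutes {0..<n} \<and> (\<forall>i\<in>{m..<n}. (\<tau> \<circ> g) i = g i)"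
      using permutes_compose[OF gn] by simp
  qed
  show "(\<lambda>\<sigma>. \<sigma> \<circ> Hilbert_Choice.inv g) `
            {\<sigma>. \<sigma> permutes {0..<n} \<and> (\<forall>i\<in>{m..<n}. \<sigma> i = g i)}
          \<subseteq> {\<tau>. \<tau> permutes {0..<m}}"
  proof clarify
    fix \<sigma> assume \<sigma>: "\<sigma> permutes {0..<n}" and \<sigma>g: "\<forall>i\<in>{m..<n}. \<sigma> i = g i"
    have "\<sigma> \<circ> Hilbert_Choice.inv g permutes {0..<n}"
      by (rule permutes_compose[OF permutes_inv[OF gn] \<sigma>])
    then show "\<sigma> \<circ> Hilbert_Choice.inv g permutes {0..<m}"
    proof (rule permutes_superset)
      fix y assume "y \<in> {0..<n} - {0..<m}"
      then have "Hilbert_Choice.inv g y \<in> {m..<n}"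
        using permutes_in_image[OF permutes_inv[OF g]] by auto
      then show "(\<sigma> \<circ> Hilbert_Choice.inv g) y = y" using \<sigma>g permutes_inverses(1)[OF g] by simp
    qed
  qed
qed

lemma leibniz_term_compose_block_permutation:
  fixes A :: "'a::comm_ring_1 mat"
  assumes mn: "m \<le> n" and g: "g permutes {m..<n}"
    and one: "\<And>i. i \<in> {m..<n} \<Longrightarrow> A $$ (i, g i) = 1"
    and \<tau>: "\<tau> permutes {0..<m}"
  shows "signof (\<tau> \<circ> g) * (\<Prod>i = 0..<n. A $$ (i, (\<tau> \<circ> g) i))
           = signof g * (signof \<tau> * (\<Prod>i = 0..<m. A $$ (i, \<tau> i)))"
proof -
  have "signof (\<tau> \<circ> g) = (signof \<tau> * signof g :: 'a)"
    by (rule signof_compose[OF \<tau> permutes_subset[OF g]]) auto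
  moreover have "(\<Prod>i = 0..<m. A $$ (i, (\<tau> \<circ> g) i)) = (\<Prod>i = 0..<m. A $$ (i, \<tau> i))"
    by (rule prod.cong[OF refl]) (simp add: permutes_not_in[OF g])
  moreover have "(\<Prod>i = m..<n. A $$ (i, (\<tau> \<circ> g) i)) = 1"
    using one permutes_in_image[OF g] permutes_not_in[OF \<tau>]
    by (intro prod.neutral) (metis atLeastLessThan_iff comp_apply not_le)
  moreover have "(\<Prod>i = 0..<n. A $$ (i, (\<tau> \<circ> g) i))
      = (\<Prod>i = 0..<m. A $$ (i, (\<tau> \<circ> g) i)) * (\<Prod>i = m..<n. A $$ (i, (\<tau> \<circ> g) i))"
    using prod.atLeastLessThan_concat[of 0 m n] mn by (metis zero_le)
  ultimately show ?thesis by (simp add: mult_ac)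
qed

lemma det_eq_signof_mult_det_leading_block:
  fixes A :: "'a::comm_ring_1 mat"
  assumes A: "A \<in> carrier_mat n n" and mn: "m \<le> n" and g: "g permutes {m..<n}"
    and one: "\<And>i. i \<in> {m..<n} \<Longrightarrow> A $$ (i, g i) = 1"
    and forced: "\<And>\<sigma> i. \<sigma> permutes {0..<n} \<Longrightarrow> \<forall>a<n. A $$ (a, \<sigma> a) \<noteq> 0 \<Longrightarrow>
                   i \<in> {m..<n} \<Longrightarrow> \<sigma> i = g i"
  shows "det A = signof g * det (mat m m (\<lambda>(i, j). A $$ (i, j)))"
proof -
  let ?term = "\<lambda>\<sigma>. signof \<sigma> * (\<Prod>i = 0..<n. A $$ (i, \<sigma> i))"
  define S where "S = {\<sigma>. \<sigma> permutes {0..<n} \<and> (\<forall>i\<in>{m..<n}. \<sigma> i = g i)}"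
  have "det A = (\<Sum>\<sigma> | \<sigma> permutes {0..<n}. ?term \<sigma>)" using det_def'[OF A] .
  also have "\<dots> = sum ?term S"
  proof (rule sum.mono_neutral_right)
    show "\<forall>\<sigma>\<in>{\<sigma>. \<sigma> permutes {0..<n}} - S. ?term \<sigma> = 0"
    proof
      fix \<sigma> assume "\<sigma> \<in> {\<sigma>. \<sigma> permutes {0..<n}} - S"
      then obtain a where "a < n" "A $$ (a, \<sigma> a) = 0" using forced unfolding S_def by blast
      then have "(\<Prod>i = 0..<n. A $$ (i, \<sigma> i)) = 0" by (intro prod_zero) auto
      then show "?term \<sigma> = 0" by simp
    qed
  qed (auto simp: S_def finite_permutations)
  also have "\<dots> = (\<Sum>\<tau> | \<tau> permutes {0..<m}. ?term (\<tau> \<circ> g))"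
    unfolding S_def
    by (rule sum.reindex_bij_betw[OF bij_betw_compose_block_permutation[OF mn g], symmetric])
  also have "\<dots> = (\<Sum>\<tau> | \<tau> permutes {0..<m}.
                     signof g * (signof \<tau> * (\<Prod>i = 0..<m. A $$ (i, \<tau> i))))"
    using leibniz_term_compose_block_permutation[OF mn g one] by (intro sum.cong) auto
  also have "\<dots> = signof g * det (mat m m (\<lambda>(i, j). A $$ (i, j)))"
    unfolding det_def'[OF mat_carrier] sum_distrib_left
    by (intro sum.cong refl arg_cong2[where f = "(*)"] prod.cong)
      (auto dest: permutes_in_image)
  finally show ?thesis .
qed

lemma is_pow2_eq_double:
  assumes "is_pow2 s" and h: "h = 2 ^ k" and "h < s" and "s < 4 * h"
  shows "s = 2 * h"
proof -
  obtain t where t: "s = 2 ^ t" using assms(1) unfolding is_pow2_def by auto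
  have "k < t" using assms(3) h t by simp
  moreover have "t < k + 2"
  proof -
    have "(2::nat) ^ t < 4 * 2 ^ k" using assms(4) h t by simp
    also have "\<dots> = 2 ^ (k + 2)" by simp
    finally show ?thesis by (rule power_less_imp_less_exp[rotated]) simp
  qed
  ultimately have "t = k + 1" by simp
  then show ?thesis using t h by simp
qed

lemma B_entry:
  assumes "i < n" and "j < n"
  shows "B n $$ (i, j) = (if is_pow2 (i + j + 2) then 1 else 0)"
  using assms unfolding B_def by (simp add: ac_simps)

lemma leading_block_B:
  assumes "m \<le> n"
  shows "mat m m (\<lambda>(i, j). B n $$ (i, j)) = B m"
  using assms unfolding B_def by (intro eq_matI) auto

lemma nonvanishing_term_of_B_reflects:
  assumes h: "h = 2 ^ k" and hn: "h \<le> n" "n < 2 * h"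
    and \<sigma>: "\<sigma> permutes {0..<n}" and nz: "\<forall>a<n. B n $$ (a, \<sigma> a) \<noteq> 0"
    and i: "2 * h - n - 1 \<le> i" "i < n"
  shows "\<sigma> i = 2 * h - 2 - i"
proof -
  have h1: "1 \<le> h" using h by simp
  have sum: "a + \<sigma> a = 2 * h - 2" if a: "a < n" "h - 1 \<le> a \<or> h - 1 \<le> \<sigma> a" for a
  proof -
    have \<sigma>a: "\<sigma> a < n" using permutes_in_image[OF \<sigma>] a by simp
    have "is_pow2 (a + \<sigma> a + 2)" using nz B_entry[OF a(1) \<sigma>a] a(1) by (auto split: if_splits)
    then have "a + \<sigma> a + 2 = 2 * h"
      by (rule is_pow2_eq_double[OF _ h]) (use a \<sigma>a hn h1 in auto)
    then show ?thesis by simp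
  qed
  show ?thesis
  proof (cases "h - 1 \<le> i")
    case True
    then show ?thesis using sum[of i] i by auto
  next
    case False
    define j where "j = 2 * h - 2 - i"
    have j: "j < n" "h - 1 \<le> j" using False i hn unfolding j_def by auto
    then obtain a where a: "a < n" "\<sigma> a = j"
      using permutes_image[OF \<sigma>] by (metis atLeastLessThan_iff imageE zero_le)
    then have "a = i" using sum[of a] j False unfolding j_def by auto
    then show ?thesis using a j_def by simp
  qed
qed

lemma det_B_reduction:
  assumes h: "h = 2 ^ k" and hn: "h \<le> n" "n < 2 * h"
  shows "det (B n) \<in> {det (B (2 * h - n - 1)), - det (B (2 * h - n - 1))}"
proof -
  define m where "m = 2 * h - n - 1"
  define g where "g i = (if m \<le> i \<and> i < n then 2 * h - 2 - i else i)" for i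
  have h1: "1 \<le> h" using h by simp
  have g_block: "g i \<in> {m..<n} \<and> g (g i) = i \<and> i + g i = 2 * h - 2" if "i \<in> {m..<n}" for i
    using that hn h1 unfolding g_def m_def by auto
  have g: "g permutes {m..<n}"
  proof (rule bij_imp_permutes)
    show "bij_betw g {m..<n} {m..<n}"
      by (rule bij_betw_byWitness[where f' = g]) (use g_block in auto)
  qed (auto simp: g_def)
  have one: "B n $$ (i, g i) = 1" if "i \<in> {m..<n}" for i
  proof -
    have "is_pow2 (i + g i + 2)"
      unfolding is_pow2_def using g_block[OF that] h hn h1 by (intro exI[of _ "k + 1"]) auto
    then show ?thesis using B_entry g_block[OF that] that by simp
  qed
  have forced: "\<sigma> i = g i"
    if "\<sigma> permutes {0..<n}" "\<forall>a<n. B n $$ (a, \<sigma> a) \<noteq> 0" "i \<in> {m..<n}" for \<sigma> i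
    using nonvanishing_term_of_B_reflects[OF h hn that(1,2)] that(3) unfolding g_def m_def by auto
  have carrier: "B n \<in> carrier_mat n n" unfolding B_def by simp
  have mn: "m \<le> n" unfolding m_def using hn by simp
  have "det (B n) = signof g * det (mat m m (\<lambda>(i, j). B n $$ (i, j)))"
    by (rule det_eq_signof_mult_det_leading_block[OF carrier mn g]) (use one forced in auto)
  then have "det (B n) = signof g * det (B m)" unfolding leading_block_B[OF mn] .
  moreover have "(signof g :: int) \<in> {1, -1}" by (rule signof_pm_one)
  ultimately show ?thesis unfolding m_def by auto
qed

lemma det_B: "det (B n) \<in> {1, -1}"
proof (induction n rule: less_induct)
  case (less n)
  show ?case
  proof (cases "n = 0")
    case True
    then show ?thesis unfolding det_def B_def by (simp add: permutes_empty)
  next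
    case False
    then obtain k where k: "2 ^ k \<le> n" "n < 2 ^ (k + 1)" using ex_power_ivl1[of 2 n] by auto
    then have "det (B n) \<in> {det (B (2 * 2 ^ k - n - 1)), - det (B (2 * 2 ^ k - n - 1))}"
      by (intro det_B_reduction) auto
    moreover have "2 * 2 ^ k - n - 1 < n" using k by simp
    ultimately show ?thesis using less.IH by fastforce
  qed
qed

theorem mainTheorem5:
  fixes n :: nat
  assumes "n \<ge> 1"
  shows "det (B n) \<in> {1, -1}"
  by (rule det_B)

end
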